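(* Fix spins $j_1,\dots,j_4\in\frac12\mathbb{Z}_{\ge0}$ with $J=j_1+j_2+j_3+j_4\in\mathbb{Z}$. Then in $\mathcal{H}_{j_1j_2j_3j_4}$ the states $|S,T\rangle$ are not linearly independent, and all the linear relations among them are generated by the fundamental relation $$(k_{12}+1)(k_{34}+1)\,|S-1,T\rangle-(k_{13}+1)(k_{24}+1)\,|S,T-1\rangle+k_{14}k_{23}\,|S,T\rangle=0,$$ where $k_{ij}=k_{ij}(j_i,S,T)$.
   Context: Spinors: $[z|w\rangle=z_0w_1-z_1w_0$ for $z,w\in\mathbb{C}^2$. $\mathcal{H}_{j_1j_2j_3j_4}$ is the space of holomorphic functions $f(z_1,\dots,z_4)$ on $(\mathbb{C}^2)^4$ that are homogeneous of degree $2j_i$ in $z_i$ and invariant under $z_i\mapsto gz_i$ for all $g\in SU(2)$ (the space of 4-valent $SU(2)$ intertwiners). For integers or half-integers $S,T$ with $S-j_1-j_2\in\mathbb{Z}$ and $T-j_1-j_3\in\mathbb{Z}$, put $U=J-S-T$ and $$k_{12}=j_1+j_2-S,\ k_{34}=j_3+j_4-S,\ k_{13}=j_1+j_3-T,\ k_{24}=j_2+j_4-T,\ k_{14}=j_1+j_4-U,\ k_{23}=j_2+j_3-U.$$ $(S,T)$ is admissible if all $k_{ij}\ge0$. For admissible $(S,T)$, $|S,T\rangle$ is the function $$(z_i|S,T\rangle=\prod_{i<j}\frac{[z_i|z_j\rangle^{k_{ij}}}{k_{ij}!},$$ and $|S,T\rangle:=0$ if $(S,T)$ is not admissible. *)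

theory Defs
  imports Complex_Main
begin

definition bracket :: "complex \<times> complex \<Rightarrow> complex \<times> complex \<Rightarrow> complex" where
  "bracket z w = fst z * snd w - snd z * fst w"

definition Jtot :: "(nat \<Rightarrow> real) \<Rightarrow> real" where
  "Jtot j = j 1 + j 2 + j 3 + j 4"

definition kk :: "(nat \<Rightarrow> real) \<Rightarrow> real \<Rightarrow> real \<Rightarrow> nat \<Rightarrow> nat \<Rightarrow> real" where
  "kk j S T a b =
     (let U = Jtot j - S - T in
      if (a, b) = (1, 2) then j 1 + j 2 - S
      else if (a, b) = (3, 4) then j 3 + j 4 - S
      else if (a, b) = (1, 3) then j 1 + j 3 - T
      else if (a, b) = (2, 4) then j 2 + j 4 - T
      else if (a, b) = (1, 4) then j 1 + j 4 - U
      else if (a, b) = (2, 3) then j 2 + j 3 - U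
      else 0)"

definition in_lattice :: "(nat \<Rightarrow> real) \<Rightarrow> real \<Rightarrow> real \<Rightarrow> bool" where
  "in_lattice j S T \<longleftrightarrow> S - j 1 - j 2 \<in> \<int> \<and> T - j 1 - j 3 \<in> \<int>"

definition admissible :: "(nat \<Rightarrow> real) \<Rightarrow> real \<Rightarrow> real \<Rightarrow> bool" where
  "admissible j S T \<longleftrightarrow> in_lattice j S T \<and>
     (\<forall>a b. 1 \<le> a \<and> a < b \<and> b \<le> 4 \<longrightarrow> kk j S T a b \<ge> 0)"

definition state :: "(nat \<Rightarrow> real) \<Rightarrow> real \<Rightarrow> real \<Rightarrow> (nat \<Rightarrow> complex \<times> complex) \<Rightarrow> complex" where
  "state j S T z =
     (if admissible j S T then
        (\<Prod>a\<in>{1..4::nat}. \<Prod>b\<in>{a<..4::nat}.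
           bracket (z a) (z b) ^ nat \<lfloor>kk j S T a b\<rfloor> / fact (nat \<lfloor>kk j S T a b\<rfloor>))
      else 0)"

definition adm_set :: "(nat \<Rightarrow> real) \<Rightarrow> (real \<times> real) set" where
  "adm_set j = {p. admissible j (fst p) (snd p)}"

definition is_relation :: "(nat \<Rightarrow> real) \<Rightarrow> (real \<times> real \<Rightarrow> complex) \<Rightarrow> bool" where
  "is_relation j c \<longleftrightarrow> (\<forall>p. p \<notin> adm_set j \<longrightarrow> c p = 0) \<and>
     (\<forall>z. (\<Sum>p\<in>adm_set j. c p * state j (fst p) (snd p) z) = 0)"

definition fund :: "(nat \<Rightarrow> real) \<Rightarrow> real \<times> real \<Rightarrow> real \<times> real \<Rightarrow> complex" where
  "fund j q p =
     (let S = fst q; T = snd q in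
       complex_of_real
        ((if p = (S - 1, T) then (kk j S T 1 2 + 1) * (kk j S T 3 4 + 1) else 0)
         - (if p = (S, T - 1) then (kk j S T 1 3 + 1) * (kk j S T 2 4 + 1) else 0)
         + (if p = (S, T) then kk j S T 1 4 * kk j S T 2 3 else 0)))"

text \<open>A relation is generated by the fundamental relations if it is a finite complex linear
  combination of them (each restricted to the admissible pairs, since |S,T> = 0 otherwise).\<close>
definition generated_by_fund :: "(nat \<Rightarrow> real) \<Rightarrow> (real \<times> real \<Rightarrow> complex) \<Rightarrow> bool" where
  "generated_by_fund j c \<longleftrightarrow>
     (\<exists>F a. finite F \<and> (\<forall>q\<in>F. in_lattice j (fst q) (snd q)) \<and>
        c = (\<lambda>p. if p \<in> adm_set j then (\<Sum>q\<in>F. a q * fund j q p) else 0))"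

end

theory Submission
  imports Defs "HOL-Computational_Algebra.Polynomial"
begin

text \<open>Write p = (k12, k13) in Z^2 for the label (S, T); the other four k's are affine in p and
  |S,T> is a product of divided powers of the six brackets. The Pluecker identity
  [12][34] - [13][24] + [14][23] = 0, multiplied by a suitable monomial, is exactly the
  fundamental relation, so every combination of fundamental relations is a relation. Conversely,
  the fundamental relation at a point q with k14 k23 ~= 0 has the nonzero coefficient k14 k23
  at q and its other two coefficients at points where k14 is smaller, so any relation can be
  reduced, modulo fundamental relations, to one supported on the edge k14 k23 = 0 of the
  admissible polygon. The states on that edge are linearly independent: at the spinors
  (1,0), (1,x), (1,1), (0,1) they become distinct powers of x times a common factor. If two
  admissible points exist, their componentwise minimum has k14 k23 ~= 0, and the fundamental
  relation there is a nonzero relation.\<close>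

definition divpow :: "int \<Rightarrow> 'a::field_char_0 \<Rightarrow> 'a" where
  "divpow k w = (if 0 \<le> k then w ^ nat k / fact (nat k) else 0)"

lemma divpow_succ: "of_int (k + 1) * divpow (k + 1) w = w * divpow k w"
proof (cases "0 \<le> k")
  case True
  then have "nat (k + 1) = Suc (nat k)" by simp
  moreover have "of_int (k + 1) = (of_nat (Suc (nat k)) :: 'a)" using True by simp
  ultimately show ?thesis using True
    by (simp add: divpow_def fact_Suc field_simps del: of_nat_Suc)
next
  case False
  then show ?thesis by (cases "k = -1") (auto simp: divpow_def)
qed

lemma divpow_nonzero: "0 \<le> k \<Longrightarrow> w \<noteq> 0 \<Longrightarrow> divpow k w \<noteq> 0"
  by (simp add: divpow_def)

lemma bracket_plucker:
  "bracket a b * bracket c d - bracket a c * bracket b d + bracket a d * bracket b c = 0"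
  by (simp add: bracket_def algebra_simps)

definition spinor_monomial ::
    "(nat \<Rightarrow> complex \<times> complex) \<Rightarrow> int \<Rightarrow> int \<Rightarrow> int \<Rightarrow> int \<Rightarrow> int \<Rightarrow> int \<Rightarrow> complex" where
  "spinor_monomial z n12 n34 n13 n24 n14 n23 =
     divpow n12 (bracket (z 1) (z 2)) * divpow n34 (bracket (z 3) (z 4)) *
     divpow n13 (bracket (z 1) (z 3)) * divpow n24 (bracket (z 2) (z 4)) *
     divpow n14 (bracket (z 1) (z 4)) * divpow n23 (bracket (z 2) (z 3))"

lemma spinor_monomial_plucker:
  "of_int ((n12 + 1) * (n34 + 1)) * spinor_monomial z (n12 + 1) (n34 + 1) n13 n24 (n14 - 1) (n23 - 1)
   - of_int ((n13 + 1) * (n24 + 1)) * spinor_monomial z n12 n34 (n13 + 1) (n24 + 1) (n14 - 1) (n23 - 1)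
   + of_int (n14 * n23) * spinor_monomial z n12 n34 n13 n24 n14 n23 = 0"
proof -
  define R where "R = spinor_monomial z n12 n34 n13 n24 (n14 - 1) (n23 - 1)"
  have succ: "of_int (k + 1) * divpow (k + 1) w * (of_int (l + 1) * divpow (l + 1) v)
      = w * v * (divpow k w * divpow l v)" for k l and w v :: complex
    by (subst (1 2) divpow_succ) (simp only: ac_simps)
  have t12: "of_int ((n12 + 1) * (n34 + 1)) * spinor_monomial z (n12 + 1) (n34 + 1) n13 n24 (n14 - 1) (n23 - 1)
      = bracket (z 1) (z 2) * bracket (z 3) (z 4) * R"
    using succ[of n12 "bracket (z 1) (z 2)" n34 "bracket (z 3) (z 4)"]
    unfolding R_def spinor_monomial_def by (simp add: ac_simps)
  have t13: "of_int ((n13 + 1) * (n24 + 1)) * spinor_monomial z n12 n34 (n13 + 1) (n24 + 1) (n14 - 1) (n23 - 1)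
      = bracket (z 1) (z 3) * bracket (z 2) (z 4) * R"
    using succ[of n13 "bracket (z 1) (z 3)" n24 "bracket (z 2) (z 4)"]
    unfolding R_def spinor_monomial_def by (simp add: ac_simps)
  have t14: "of_int (n14 * n23) * spinor_monomial z n12 n34 n13 n24 n14 n23
      = bracket (z 1) (z 4) * bracket (z 2) (z 3) * R"
    using succ[of "n14 - 1" "bracket (z 1) (z 4)" "n23 - 1" "bracket (z 2) (z 3)"]
    unfolding R_def spinor_monomial_def by (simp add: ac_simps)
  have "(bracket (z 1) (z 2) * bracket (z 3) (z 4) - bracket (z 1) (z 3) * bracket (z 2) (z 4)
      + bracket (z 1) (z 4) * bracket (z 2) (z 3)) * R = 0"
    by (simp only: bracket_plucker mult_zero_left)
  then show ?thesis unfolding t12 t13 t14 by (simp add: algebra_simps)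
qed

lemma monomial_sum_eq_0_imp_coeff_eq_0:
  fixes c :: "'i \<Rightarrow> 'a::idom"
  assumes "finite A" "inj_on f A" "infinite X" "\<And>x. x \<in> X \<Longrightarrow> (\<Sum>i\<in>A. c i * x ^ f i) = 0"
    and "i \<in> A"
  shows "c i = 0"
proof -
  define Q where "Q = (\<Sum>i\<in>A. monom (c i) (f i))"
  have "X \<subseteq> {x. poly Q x = 0}"
    using assms(4) by (auto simp: Q_def poly_sum poly_monom)
  then have "Q = 0"
    using assms(3) poly_roots_finite finite_subset by blast
  have "coeff Q (f i) = (\<Sum>i'\<in>A. if i' = i then c i' else 0)"
    unfolding Q_def coeff_sum coeff_monom
    by (rule sum.cong) (use assms(2,5) in \<open>auto dest: inj_onD\<close>)
  also have "\<dots> = c i" using assms(1,5) by simp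
  finally show ?thesis using \<open>Q = 0\<close> by simp
qed

lemma all_pairs_below_4:
  "(\<forall>a b. 1 \<le> a \<and> a < b \<and> b \<le> (4::nat) \<longrightarrow> Q a b)
     \<longleftrightarrow> Q 1 2 \<and> Q 1 3 \<and> Q 1 4 \<and> Q 2 3 \<and> Q 2 4 \<and> Q 3 4"
proof -
  have "1 \<le> a \<and> a < b \<and> b \<le> (4::nat) \<longleftrightarrow>
      (a, b) \<in> {(1, 2), (1, 3), (1, 4), (2, 3), (2, 4), (3, 4)}" for a b
    by auto
  then show ?thesis by auto
qed

lemma prod_pairs_below_4:
  "(\<Prod>a\<in>{1..4::nat}. \<Prod>b\<in>{a<..4::nat}. g a b)
     = g 1 2 * g 3 4 * g 1 3 * g 2 4 * g 1 4 * (g 2 3 :: 'a::comm_monoid_mult)"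
proof -
  have "{1..4::nat} = {1, 2, 3, 4}" "{Suc 0<..4::nat} = {2, 3, 4}" "{2<..4::nat} = {3, 4}"
    "{3<..4::nat} = {4}" "{4<..4::nat} = {}" by auto
  then show ?thesis by (simp add: ac_simps)
qed

definition test_spinors :: "complex \<Rightarrow> nat \<Rightarrow> complex \<times> complex" where
  "test_spinors x i = (if i = 1 then (1, 0) else if i = 2 then (1, x) else if i = 3 then (1, 1) else (0, 1))"

locale half_integral_spins =
  fixes j :: "nat \<Rightarrow> real" and d1 d2 d3 J :: int
  assumes twice_j1: "2 * j 1 = of_int d1" and twice_j2: "2 * j 2 = of_int d2"
    and twice_j3: "2 * j 3 = of_int d3" and Jtot_eq: "Jtot j = of_int J"
begin

definition k12 :: "int \<times> int \<Rightarrow> int" where "k12 p = fst p"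
definition k34 :: "int \<times> int \<Rightarrow> int" where "k34 p = J - d1 - d2 + fst p"
definition k13 :: "int \<times> int \<Rightarrow> int" where "k13 p = snd p"
definition k24 :: "int \<times> int \<Rightarrow> int" where "k24 p = J - d1 - d3 + snd p"
definition k14 :: "int \<times> int \<Rightarrow> int" where "k14 p = d1 - fst p - snd p"
definition k23 :: "int \<times> int \<Rightarrow> int" where "k23 p = d1 + d2 + d3 - J - fst p - snd p"

lemmas k_defs = k12_def k34_def k13_def k24_def k14_def k23_def

definition Adm :: "(int \<times> int) set" where
  "Adm = {p. 0 \<le> k12 p \<and> 0 \<le> k34 p \<and> 0 \<le> k13 p \<and> 0 \<le> k24 p \<and> 0 \<le> k14 p \<and> 0 \<le> k23 p}"

definition label :: "int \<times> int \<Rightarrow> real \<times> real" where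
  "label p = (j 1 + j 2 - of_int (fst p), j 1 + j 3 - of_int (snd p))"

definition st :: "(nat \<Rightarrow> complex \<times> complex) \<Rightarrow> int \<times> int \<Rightarrow> complex" where
  "st z p = spinor_monomial z (k12 p) (k34 p) (k13 p) (k24 p) (k14 p) (k23 p)"

lemma inj_label: "inj label"
  unfolding inj_def label_def by (auto simp: prod_eq_iff)

lemma inj_on_label: "inj_on label A"
  using inj_label by (rule inj_on_subset) simp

lemma label_mem_label_image_iff: "label p \<in> label ` A \<longleftrightarrow> p \<in> A"
  by (rule inj_image_mem_iff[OF inj_label])

lemma kk_label:
  "kk j (fst (label p)) (snd (label p)) 1 2 = of_int (k12 p)"
  "kk j (fst (label p)) (snd (label p)) 3 4 = of_int (k34 p)"
  "kk j (fst (label p)) (snd (label p)) 1 3 = of_int (k13 p)"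
  "kk j (fst (label p)) (snd (label p)) 2 4 = of_int (k24 p)"
  "kk j (fst (label p)) (snd (label p)) 1 4 = of_int (k14 p)"
  "kk j (fst (label p)) (snd (label p)) 2 3 = of_int (k23 p)"
  using twice_j1 twice_j2 twice_j3 Jtot_eq
  by (simp_all add: kk_def Let_def label_def k_defs Jtot_def; linarith)+

lemma in_lattice_iff_label: "in_lattice j S T \<longleftrightarrow> (S, T) \<in> range label"
proof
  assume "in_lattice j S T"
  then obtain m n where "S - j 1 - j 2 = of_int m" "T - j 1 - j 3 = of_int n"
    unfolding in_lattice_def by (auto elim!: Ints_cases)
  then have "(S, T) = label (- m, - n)" by (simp add: label_def; linarith)
  then show "(S, T) \<in> range label" by blast
next
  assume "(S, T) \<in> range label"
  then obtain p where "(S, T) = label p" by blast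
  then have "S - j 1 - j 2 = of_int (- fst p)" "T - j 1 - j 3 = of_int (- snd p)"
    by (simp_all add: label_def)
  then show "in_lattice j S T" unfolding in_lattice_def by (metis Ints_of_int)
qed

lemma admissible_label_iff: "admissible j (fst (label p)) (snd (label p)) \<longleftrightarrow> p \<in> Adm"
  using in_lattice_iff_label[of "fst (label p)" "snd (label p)"]
  unfolding admissible_def all_pairs_below_4 kk_label Adm_def by auto

lemma adm_set_eq: "adm_set j = label ` Adm"
proof
  show "adm_set j \<subseteq> label ` Adm"
  proof
    fix x assume "x \<in> adm_set j"
    then have "admissible j (fst x) (snd x)" by (simp add: adm_set_def)
    moreover obtain p where "x = label p"
      using calculation in_lattice_iff_label unfolding admissible_def by (metis prod.collapse rangeE)
    ultimately show "x \<in> label ` Adm" using admissible_label_iff by auto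
  qed
  show "label ` Adm \<subseteq> adm_set j" using admissible_label_iff by (auto simp: adm_set_def)
qed

lemma state_label: "state j (fst (label p)) (snd (label p)) z = st z p"
  unfolding state_def admissible_label_iff prod_pairs_below_4 kk_label st_def
    spinor_monomial_def divpow_def Adm_def
  by auto

lemma st_eq_0: "p \<notin> Adm \<Longrightarrow> st z p = 0"
  by (auto simp: st_def spinor_monomial_def divpow_def Adm_def)

lemma finite_Adm: "finite Adm"
proof -
  have "Adm \<subseteq> {0..d1} \<times> {0..d1}" by (auto simp: Adm_def k_defs)
  then show ?thesis by (rule finite_subset) simp
qed

definition fund_int :: "int \<times> int \<Rightarrow> int \<times> int \<Rightarrow> complex" where
  "fund_int q p = of_int
     ((if p = (fst q + 1, snd q) then (k12 q + 1) * (k34 q + 1) else 0)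
      - (if p = (fst q, snd q + 1) then (k13 q + 1) * (k24 q + 1) else 0)
      + (if p = q then k14 q * k23 q else 0))"

lemma fund_label: "fund j (label q) (label p) = fund_int q p"
proof -
  have "label p = (fst (label q) - 1, snd (label q)) \<longleftrightarrow> p = (fst q + 1, snd q)"
    "label p = (fst (label q), snd (label q) - 1) \<longleftrightarrow> p = (fst q, snd q + 1)"
    "label p = (fst (label q), snd (label q)) \<longleftrightarrow> p = q"
    by (auto simp: label_def prod_eq_iff)
  then show ?thesis unfolding fund_def Let_def kk_label fund_int_def by simp
qed

definition is_relation_int :: "(int \<times> int \<Rightarrow> complex) \<Rightarrow> bool" where
  "is_relation_int e \<longleftrightarrow> (\<forall>p. p \<notin> Adm \<longrightarrow> e p = 0) \<and> (\<forall>z. (\<Sum>p\<in>Adm. e p * st z p) = 0)"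

definition generated_int :: "(int \<times> int \<Rightarrow> complex) \<Rightarrow> bool" where
  "generated_int e \<longleftrightarrow>
     (\<exists>F a. finite F \<and> e = (\<lambda>p. if p \<in> Adm then (\<Sum>q\<in>F. a q * fund_int q p) else 0))"

lemma fund_int_relation: "(\<Sum>p\<in>Adm. fund_int q p * st z p) = 0"
proof -
  define q1 q2 where "q1 = (fst q + 1, snd q)" and "q2 = (fst q, snd q + 1)"
  have distinct: "q1 \<noteq> q2" "q1 \<noteq> q" "q2 \<noteq> q" by (auto simp: q1_def q2_def prod_eq_iff)
  have "(\<Sum>p\<in>Adm. fund_int q p * st z p) = (\<Sum>p\<in>{q1, q2, q}. fund_int q p * st z p)"
    by (rule sum.same_carrierI[of "Adm \<union> {q1, q2, q}"])
      (auto simp: finite_Adm st_eq_0 fund_int_def q1_def q2_def)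
  also have "\<dots> = 0"
    using spinor_monomial_plucker[of "k12 q" "k34 q" z "k13 q" "k24 q" "k14 q" "k23 q"] distinct
    unfolding fund_int_def st_def
    by (simp add: q1_def q2_def prod_eq_iff k_defs algebra_simps)
  finally show ?thesis .
qed

lemma generated_imp_relation_int:
  assumes "generated_int e" shows "is_relation_int e"
proof -
  obtain F a where "finite F" and e: "e = (\<lambda>p. if p \<in> Adm then (\<Sum>q\<in>F. a q * fund_int q p) else 0)"
    using assms unfolding generated_int_def by blast
  have "(\<Sum>p\<in>Adm. e p * st z p) = 0" for z
  proof -
    have "(\<Sum>p\<in>Adm. e p * st z p) = (\<Sum>p\<in>Adm. \<Sum>q\<in>F. a q * (fund_int q p * st z p))"
      by (simp add: e sum_distrib_right mult.assoc)
    also have "\<dots> = (\<Sum>q\<in>F. a q * (\<Sum>p\<in>Adm. fund_int q p * st z p))"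
      by (subst sum.swap) (simp add: sum_distrib_left)
    also have "\<dots> = 0" by (simp add: fund_int_relation)
    finally show ?thesis .
  qed
  then show ?thesis unfolding is_relation_int_def by (simp add: e)
qed

lemma generated_int_zero: "generated_int (\<lambda>_. 0)"
  unfolding generated_int_def by (rule exI[of _ "{}"]) (simp add: fun_eq_iff)

lemma generated_int_add_fund:
  assumes "generated_int g"
  shows "generated_int (\<lambda>p. g p + (if p \<in> Adm then \<kappa> * fund_int q p else 0))"
proof -
  obtain F a where F: "finite F" and g: "g = (\<lambda>p. if p \<in> Adm then (\<Sum>q\<in>F. a q * fund_int q p) else 0)"
    using assms unfolding generated_int_def by blast
  define a' where "a' x = (if x \<in> F then a x else 0) + (if x = q then \<kappa> else 0)" for x
  have "(\<Sum>x\<in>insert q F. a' x * fund_int x p) = (\<Sum>x\<in>F. a x * fund_int x p) + \<kappa> * fund_int q p"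
    for p
  proof -
    have "(\<Sum>x\<in>insert q F. a' x * fund_int x p)
        = (\<Sum>x\<in>insert q F. if x \<in> F then a x * fund_int x p else 0)
          + (\<Sum>x\<in>insert q F. if x = q then \<kappa> * fund_int x p else 0)"
      unfolding sum.distrib[symmetric] by (rule sum.cong) (auto simp: a'_def distrib_right)
    also have "\<dots> = (\<Sum>x\<in>F. a x * fund_int x p) + \<kappa> * fund_int q p"
      using F by (simp add: sum.If_cases Int_insert_left insert_absorb)
    finally show ?thesis .
  qed
  then have "(\<lambda>p. g p + (if p \<in> Adm then \<kappa> * fund_int q p else 0))
      = (\<lambda>p. if p \<in> Adm then (\<Sum>x\<in>insert q F. a' x * fund_int x p) else 0)"
    by (auto simp: g)
  then show ?thesis unfolding generated_int_def using F by blast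
qed

definition pivot :: "int \<times> int \<Rightarrow> bool" where
  "pivot p \<longleftrightarrow> p \<in> Adm \<and> k14 p * k23 p \<noteq> 0"

definition pivot_support :: "(int \<times> int \<Rightarrow> complex) \<Rightarrow> (int \<times> int) set" where
  "pivot_support e = {p. pivot p \<and> e p \<noteq> 0}"

definition pivot_weight :: "(int \<times> int \<Rightarrow> complex) \<Rightarrow> nat" where
  "pivot_weight e = (\<Sum>p\<in>pivot_support e. 3 ^ nat (k14 p))"

lemma finite_pivot_support: "finite (pivot_support e)"
  by (rule finite_subset[OF _ finite_Adm]) (auto simp: pivot_support_def pivot_def)

text \<open>Eliminating q moves its coefficient to two points where k14 is one smaller, which the
  weights 3 ^ k14 turn into a strict decrease.\<close>
lemma pivot_weight_less:
  assumes q: "q \<in> pivot_support e"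
    and sub: "pivot_support e' \<subseteq> (pivot_support e - {q}) \<union> {(fst q + 1, snd q), (fst q, snd q + 1)}"
  shows "pivot_weight e' < pivot_weight e"
proof -
  define w where "w p = (3::nat) ^ nat (k14 p)" for p
  define D where "D = pivot_support e - {q}"
  have "1 \<le> k14 q" using q by (auto simp: pivot_support_def pivot_def Adm_def)
  then have "w q = 3 * 3 ^ nat (k14 q - 1)"
    by (simp add: w_def flip: power_Suc)
  moreover have "w (fst q + 1, snd q) = 3 ^ nat (k14 q - 1)" "w (fst q, snd q + 1) = 3 ^ nat (k14 q - 1)"
    by (simp_all add: w_def k14_def algebra_simps)
  ultimately have w12: "w (fst q + 1, snd q) + w (fst q, snd q + 1) < w q" by simp
  have "pivot_weight e' \<le> sum w (D \<union> {(fst q + 1, snd q), (fst q, snd q + 1)})"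
    unfolding pivot_weight_def w_def D_def by (rule sum_mono2) (use sub finite_pivot_support in auto)
  also have "\<dots> \<le> sum w D + (w (fst q + 1, snd q) + w (fst q, snd q + 1))"
    using sum_Un_nat[of D "{(fst q + 1, snd q), (fst q, snd q + 1)}" w]
    by (simp add: D_def finite_pivot_support prod_eq_iff)
  also have "\<dots> < sum w D + w q" using w12 by simp
  also have "\<dots> = pivot_weight e"
    using q finite_pivot_support unfolding pivot_weight_def w_def D_def by (simp add: sum.remove)
  finally show ?thesis .
qed

lemma generated_int_agrees_on_pivots: "\<exists>g. generated_int g \<and> (\<forall>p. pivot p \<longrightarrow> e p = g p)"
proof (induction "pivot_weight e" arbitrary: e rule: less_induct)
  case less
  show ?case
  proof (cases "pivot_support e = {}")
    case True
    then show ?thesis using generated_int_zero by (auto simp: pivot_support_def)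
  next
    case False
    then obtain q where q: "q \<in> pivot_support e" by blast
    then have "q \<in> Adm" and nz: "k14 q * k23 q \<noteq> 0" by (auto simp: pivot_support_def pivot_def)
    define \<kappa> where "\<kappa> = e q / of_int (k14 q * k23 q)"
    define f where "f p = (if p \<in> Adm then \<kappa> * fund_int q p else 0)" for p
    define e' where "e' p = e p - f p" for p
    have eliminated: "e' q = 0"
      using \<open>q \<in> Adm\<close> nz by (simp add: e'_def f_def \<kappa>_def fund_int_def prod_eq_iff)
    have unchanged: "e' p = e p" if "p \<notin> {q, (fst q + 1, snd q), (fst q, snd q + 1)}" for p
      using that by (simp add: e'_def f_def fund_int_def)
    have "pivot_support e' \<subseteq> (pivot_support e - {q}) \<union> {(fst q + 1, snd q), (fst q, snd q + 1)}"
    proof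
      fix p assume "p \<in> pivot_support e'"
      then show "p \<in> (pivot_support e - {q}) \<union> {(fst q + 1, snd q), (fst q, snd q + 1)}"
        using eliminated unchanged[of p] by (cases "p = q") (auto simp: pivot_support_def)
    qed
    then obtain g' where g': "generated_int g'" "\<forall>p. pivot p \<longrightarrow> e' p = g' p"
      using less.hyps pivot_weight_less[OF q] by blast
    have "generated_int (\<lambda>p. g' p + f p)"
      unfolding f_def by (rule generated_int_add_fund[OF g'(1)])
    moreover have "\<forall>p. pivot p \<longrightarrow> e p = g' p + f p"
      using g'(2) by (simp add: e'_def algebra_simps)
    ultimately show ?thesis by blast
  qed
qed

lemma st_test_spinors:
  "st (test_spinors x) p = divpow (k12 p) x * divpow (k23 p) (1 - x) *
     (divpow (k34 p) 1 * divpow (k13 p) 1 * divpow (k24 p) 1 * divpow (k14 p) 1)"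
  by (simp add: st_def spinor_monomial_def bracket_def test_spinors_def ac_simps)

text \<open>Off the pivots, Adm lies on the line fst p + snd p = m, along which k23 is constant.\<close>
lemma relation_int_vanishing_on_pivots:
  assumes rel: "is_relation_int d" and pivots: "\<And>p. pivot p \<Longrightarrow> d p = 0"
  shows "d p = 0"
proof -
  define B where "B = {p \<in> Adm. \<not> pivot p}"
  define m where "m = min d1 (d1 + d2 + d3 - J)"
  define N where "N = nat (d1 + d2 + d3 - J - m)"
  have edge: "fst p + snd p = m" "0 \<le> fst p" "k23 p = int N" if "p \<in> B" for p
    using that by (auto simp: B_def pivot_def Adm_def k_defs m_def N_def)
  define c where "c p = d p * (divpow (k34 p) 1 * divpow (k13 p) 1 * divpow (k24 p) 1 * divpow (k14 p) 1)
      / (fact (nat (fst p)) * fact N)" for p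
  have vanishing: "(\<Sum>p\<in>B. c p * x ^ nat (fst p)) = 0" if "x \<in> UNIV - {1}" for x
  proof -
    have "0 = (\<Sum>p\<in>Adm. d p * st (test_spinors x) p)" using rel by (simp add: is_relation_int_def)
    also have "\<dots> = (\<Sum>p\<in>B. d p * st (test_spinors x) p)"
      by (rule sum.mono_neutral_right) (auto simp: finite_Adm B_def pivots)
    also have "\<dots> = (\<Sum>p\<in>B. c p * x ^ nat (fst p)) * (1 - x) ^ N"
      unfolding sum_distrib_right
      by (rule sum.cong) (auto simp: st_test_spinors divpow_def c_def edge k12_def)
    finally show ?thesis using that by simp
  qed
  have inj: "inj_on (\<lambda>p. nat (fst p)) B"
    by (rule inj_onI) (metis edge(1,2) eq_nat_nat_iff add_left_cancel prod.expand)
  have "finite B" by (simp add: B_def finite_Adm)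
  have "infinite (UNIV - {1 :: complex})" by (simp add: infinite_UNIV_char_0)
  show ?thesis
  proof (cases "p \<in> B")
    case True
    then have "c p = 0"
      using monomial_sum_eq_0_imp_coeff_eq_0[OF \<open>finite B\<close> inj \<open>infinite _\<close> vanishing] by blast
    moreover have "divpow (k34 p) 1 * divpow (k13 p) 1 * divpow (k24 p) 1 * divpow (k14 p) (1::complex) \<noteq> 0"
      using True by (simp add: B_def Adm_def divpow_nonzero)
    ultimately show ?thesis by (simp add: c_def)
  next
    case False
    then show ?thesis using rel pivots unfolding B_def is_relation_int_def by blast
  qed
qed

lemma relation_imp_generated_int:
  assumes rel: "is_relation_int e" shows "generated_int e"
proof -
  obtain g where g: "generated_int g" and agree: "\<And>p. pivot p \<Longrightarrow> e p = g p"
    using generated_int_agrees_on_pivots by blast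
  have "is_relation_int g" using g by (rule generated_imp_relation_int)
  then have "is_relation_int (\<lambda>p. e p - g p)"
    using rel by (simp add: is_relation_int_def left_diff_distrib sum_subtractf)
  then have "e p - g p = 0" for p
    by (rule relation_int_vanishing_on_pivots) (simp add: agree)
  then show ?thesis using g by (metis eq_iff_diff_eq_0 ext)
qed

lemma is_relation_iff_int:
  "is_relation j c \<longleftrightarrow> (\<forall>x. x \<notin> label ` Adm \<longrightarrow> c x = 0) \<and> is_relation_int (c \<circ> label)"
proof -
  have sums: "(\<Sum>x\<in>label ` Adm. c x * state j (fst x) (snd x) z) = (\<Sum>p\<in>Adm. (c \<circ> label) p * st z p)"
    for z by (simp add: sum.reindex[OF inj_on_label] state_label)
  have "(\<forall>p. p \<notin> Adm \<longrightarrow> (c \<circ> label) p = 0)" if "\<forall>x. x \<notin> label ` Adm \<longrightarrow> c x = 0"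
    using that label_mem_label_image_iff by (metis comp_apply)
  then show ?thesis unfolding is_relation_def is_relation_int_def adm_set_eq sums by blast
qed

lemma generated_by_fund_iff_int:
  "generated_by_fund j c \<longleftrightarrow> (\<forall>x. x \<notin> label ` Adm \<longrightarrow> c x = 0) \<and> generated_int (c \<circ> label)"
proof
  assume "generated_by_fund j c"
  then obtain F a where F: "finite F" "\<forall>q\<in>F. in_lattice j (fst q) (snd q)"
    and c: "c = (\<lambda>x. if x \<in> label ` Adm then (\<Sum>q\<in>F. a q * fund j q x) else 0)"
    unfolding generated_by_fund_def adm_set_eq by blast
  define F' where "F' = label -` F"
  have F_eq: "F = label ` F'" unfolding F'_def using F(2) in_lattice_iff_label by auto
  have "finite F'" unfolding F'_def using F(1) inj_label by (simp add: finite_vimageI)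
  moreover have "(c \<circ> label) p = (if p \<in> Adm then (\<Sum>q\<in>F'. (a \<circ> label) q * fund_int q p) else 0)" for p
    unfolding c F_eq comp_apply label_mem_label_image_iff
    by (simp add: sum.reindex[OF inj_on_label] fund_label)
  ultimately have "generated_int (c \<circ> label)" unfolding generated_int_def by blast
  then show "(\<forall>x. x \<notin> label ` Adm \<longrightarrow> c x = 0) \<and> generated_int (c \<circ> label)" by (simp add: c)
next
  assume "(\<forall>x. x \<notin> label ` Adm \<longrightarrow> c x = 0) \<and> generated_int (c \<circ> label)"
  then obtain F' a where outside: "\<forall>x. x \<notin> label ` Adm \<longrightarrow> c x = 0" and "finite F'"
    and c: "c \<circ> label = (\<lambda>p. if p \<in> Adm then (\<Sum>q\<in>F'. a q * fund_int q p) else 0)"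
    unfolding generated_int_def by blast
  have "c x = (if x \<in> label ` Adm then (\<Sum>q\<in>label ` F'. (a \<circ> inv label) q * fund j q x) else 0)" for x
  proof (cases "x \<in> label ` Adm")
    case True
    then obtain p where "p \<in> Adm" "x = label p" by blast
    then show ?thesis using fun_cong[OF c, of p]
      by (simp add: sum.reindex[OF inj_on_label] fund_label inv_f_f[OF inj_label])
  qed (simp add: outside)
  moreover have "\<forall>q\<in>label ` F'. in_lattice j (fst q) (snd q)" using in_lattice_iff_label by auto
  ultimately show "generated_by_fund j c"
    unfolding generated_by_fund_def adm_set_eq using \<open>finite F'\<close> by blast
qed

theorem relation_iff_generated_by_fund: "is_relation j c \<longleftrightarrow> generated_by_fund j c"
  using is_relation_iff_int generated_by_fund_iff_int relation_imp_generated_int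
    generated_imp_relation_int by blast

lemma pivot_componentwise_min:
  assumes "p \<in> Adm" "p' \<in> Adm" "p \<noteq> p'"
  shows "pivot (min (fst p) (fst p'), min (snd p) (snd p'))"
  using assms unfolding pivot_def Adm_def k_defs by (auto simp: prod_eq_iff min_def)

lemma exists_nonzero_relation:
  assumes "2 \<le> card (adm_set j)" shows "\<exists>c. is_relation j c \<and> c \<noteq> (\<lambda>_. 0)"
proof -
  have "\<not> card Adm \<le> Suc 0" using assms by (simp add: adm_set_eq card_image[OF inj_on_label])
  then obtain p p' where pp: "p \<in> Adm" "p' \<in> Adm" "p \<noteq> p'"
    unfolding card_le_Suc0_iff_eq[OF finite_Adm] by blast
  define q where "q = (min (fst p) (fst p'), min (snd p) (snd p'))"
  have "pivot q" unfolding q_def using pp by (rule pivot_componentwise_min)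
  define c where "c = (\<lambda>x. if x \<in> adm_set j then (\<Sum>r\<in>{label q}. 1 * fund j r x) else 0)"
  have "generated_by_fund j c"
    unfolding generated_by_fund_def c_def
    by (intro exI[of _ "{label q}"] exI[of _ "\<lambda>_. 1"]) (simp add: in_lattice_iff_label)
  then have "is_relation j c" by (simp add: relation_iff_generated_by_fund)
  moreover have "c (label q) = of_int (k14 q * k23 q)"
    using \<open>pivot q\<close> unfolding c_def adm_set_eq label_mem_label_image_iff pivot_def
    by (simp add: fund_label fund_int_def prod_eq_iff)
  ultimately show ?thesis using \<open>pivot q\<close> by (auto simp: pivot_def)
qed

end

theorem mainTheorem7:
  fixes j :: "nat \<Rightarrow> real"
  assumes spins: "\<forall>i\<in>{1..4::nat}. 2 * j i \<in> \<nat>"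
    and J_int: "Jtot j \<in> \<int>"
  shows "(2 \<le> card (adm_set j) \<longrightarrow> (\<exists>c. is_relation j c \<and> c \<noteq> (\<lambda>_. 0)))
         \<and> (\<forall>c. is_relation j c \<longleftrightarrow> generated_by_fund j c)"
proof -
  have "2 * j i \<in> \<int>" if "i \<in> {1, 2, 3}" for i
    using spins that Nats_subset_Ints by auto
  then obtain d1 d2 d3 J where "2 * j 1 = of_int d1" "2 * j 2 = of_int d2" "2 * j 3 = of_int d3"
    and "Jtot j = of_int J"
    using J_int by (metis Ints_cases insertCI)
  then interpret half_integral_spins j d1 d2 d3 J by unfold_locales
  show ?thesis using exists_nonzero_relation relation_iff_generated_by_fund by blast
qed

end
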